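(* Suppose that $S^{obs}$ is Minkowski-reduced in a broad sense and the Bravais class of $S$ is primitive rectangular. Then, under the assumption $\mathcal{A}_{2,1}$, $S$ is also Minkowski-reduced in a broad sense. In particular, $S$ is contained in the linear space $$ V_{rP} := \left\{\begin{pmatrix} s_{11} & 0 \\ 0 & s_{22} \end{pmatrix} : s_{11}, s_{22}\in \mathbb R \right\}. $$
   Context: $S$ denotes the true (unknown) $2$-by-$2$ positive-definite metric tensor (Gram matrix) of a 2D lattice basis, and $S^{obs}$ its observed value containing experimental errors. For symmetric $2$-by-$2$ matrices $S, T$, the inner product is $S \bullet T := \mathrm{Trace}(ST)$. A positive-definite symmetric $S$ is Minkowski-reduced in a broad sense if it is Venkov-reduced with respect to the identity $I_2$, i.e. $S \bullet I_2 \le (g S g^T) \bullet I_2$ for every $g \in GL_2(\mathbb Z)$. Assumption $\mathcal{A}_{2,1}$: if the $2$-by-$2$ metric tensor $S$ satisfies $S \bullet T \ge v^T S v$ for some nonzero $v \in \mathbb Z^2$ and some symmetric $2$-by-$2$ matrix $T$, then its observed value $S^{obs}$ also satisfies $S^{obs} \bullet T > 0$. Two lattices are in the same Bravais class if the automorphism groups $\{\sigma \in GL_2(\mathbb Z) : \sigma^T S \sigma = S\}$ of their metric tensors are conjugate in $GL_2(\mathbb Z)$; primitive rectangular is the Bravais class of a lattice with a reduced basis of two orthogonal vectors. *)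

theory Defs
  imports "HOL-Analysis.Analysis"
begin

type_synonym mat2 = "real^2^2"

definition mdot :: "mat2 \<Rightarrow> mat2 \<Rightarrow> real" where
  "mdot S T = trace (S ** T)"

definition sym_mat :: "mat2 \<Rightarrow> bool" where
  "sym_mat S \<longleftrightarrow> transpose S = S"

definition pos_def :: "mat2 \<Rightarrow> bool" where
  "pos_def S \<longleftrightarrow> sym_mat S \<and> (\<forall>x::real^2. x \<noteq> 0 \<longrightarrow> x \<bullet> (S *v x) > 0)"

definition int_vec :: "real^2 \<Rightarrow> bool" where
  "int_vec v \<longleftrightarrow> (\<forall>i. v $ i \<in> \<int>)"

definition int_mat :: "mat2 \<Rightarrow> bool" where
  "int_mat g \<longleftrightarrow> (\<forall>i j. g $ i $ j \<in> \<int>)"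

definition GL2Z :: "mat2 set" where
  "GL2Z = {g. int_mat g \<and> \<bar>det g\<bar> = 1}"

definition mdiag :: "real \<Rightarrow> real \<Rightarrow> mat2" where
  "mdiag a b = vector [vector [a, 0], vector [0, b]]"

text \<open>Minkowski-reduced in a broad sense: Venkov-reduced w.r.t. the identity.\<close>
definition minkowski_reduced_broad :: "mat2 \<Rightarrow> bool" where
  "minkowski_reduced_broad S \<longleftrightarrow> pos_def S \<and>
     (\<forall>g\<in>GL2Z. mdot S (mat 1) \<le> mdot (g ** S ** transpose g) (mat 1))"

definition aut :: "mat2 \<Rightarrow> mat2 set" where
  "aut S = {\<sigma> \<in> GL2Z. transpose \<sigma> ** S ** \<sigma> = S}"

definition conj_GL2Z :: "mat2 set \<Rightarrow> mat2 set \<Rightarrow> bool" where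
  "conj_GL2Z G H \<longleftrightarrow> (\<exists>g\<in>GL2Z. H = (\<lambda>\<sigma>. g ** \<sigma> ** matrix_inv g) ` G)"

definition same_bravais_class :: "mat2 \<Rightarrow> mat2 \<Rightarrow> bool" where
  "same_bravais_class S S' \<longleftrightarrow> conj_GL2Z (aut S) (aut S')"

text \<open>Primitive rectangular: same Bravais class as a lattice with a reduced basis of two
  orthogonal vectors of different lengths (Gram matrix diag(a,b), 0 < a < b; the
  square case a = b is the separate square Bravais class).\<close>
definition primitive_rectangular :: "mat2 \<Rightarrow> bool" where
  "primitive_rectangular S \<longleftrightarrow> (\<exists>a b. 0 < a \<and> a < b \<and> same_bravais_class S (mdiag a b))"

definition assumption_A21 :: "mat2 \<Rightarrow> mat2 \<Rightarrow> bool" where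
  "assumption_A21 S Sobs \<longleftrightarrow>
     (\<forall>v T. int_vec v \<and> v \<noteq> 0 \<and> sym_mat T \<and> mdot S T \<ge> v \<bullet> (S *v v)
        \<longrightarrow> mdot Sobs T > 0)"

definition V_rP :: "mat2 set" where
  "V_rP = {mdiag s11 s22 | s11 s22. True}"

end

(* A conjugate of the reflection diag(1, -1), which fixes every rectangular Gram matrix,
   lies in Aut(S); hence S = g^T diag(p, q) g for some g in GL_2(Z). Testing A_{2,1} with
   T = I - k^T k for k = g^-T and with v a column of g^-1, and using that S^obs is reduced,
   gives tr S - (p + q) < min(p, q). Since tr S = p |row_1 g|^2 + q |row_2 g|^2 with integer
   rows, both rows of g are signed unit vectors, so S is diagonal, with positive entries,
   and therefore reduced. *)
theory Submission
  imports Defs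
begin

lemma matrix_matrix_mult_nth_2:
  "((A::mat2) ** B) $ i $ j = A$i$1 * B$1$j + A$i$2 * B$2$j"
  by (simp add: matrix_matrix_mult_def sum_2)

lemma trace_2: "trace (A::mat2) = A$1$1 + A$2$2"
  by (simp add: trace_def sum_2)

lemma mat2_eq_iff:
  "(A::mat2) = B \<longleftrightarrow> A$1$1 = B$1$1 \<and> A$1$2 = B$1$2 \<and> A$2$1 = B$2$1 \<and> A$2$2 = B$2$2"
  by (auto simp: vec_eq_iff forall_2)

lemma mdiag_nth [simp]:
  "mdiag a b $1$1 = a" "mdiag a b $1$2 = 0" "mdiag a b $2$1 = 0" "mdiag a b $2$2 = b"
  by (simp_all add: mdiag_def)

lemma mat_1_nth_2 [simp]:
  "(mat 1::mat2) $1$1 = 1" "(mat 1::mat2) $1$2 = 0" "(mat 1::mat2) $2$1 = 0" "(mat 1::mat2) $2$2 = 1"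
  by (simp_all add: mat_def)

lemma transpose_nth [simp]: "transpose A $ i $ j = A $ j $ i"
  by (simp add: transpose_def)

lemma mdot_mat_1: "mdot X (mat 1) = trace X"
  by (simp add: mdot_def)

lemma inner_axis_matrix_axis: "axis i 1 \<bullet> (A *v axis j 1) = (A::real^'n^'n) $ i $ j"
  by (simp add: matrix_vector_mult_basis column_def inner_axis')

lemma quadratic_form_congruence:
  fixes g D :: "real^'n^'n"
  shows "v \<bullet> ((transpose g ** D ** g) *v v) = (g *v v) \<bullet> (D *v (g *v v))"
  by (metis dot_lmul_matrix vector_transpose_matrix matrix_vector_mul_assoc)

lemma congruence_inverse:
  fixes g h :: "'a::comm_semiring_1^'n^'n"
  assumes "g ** h = mat 1"
  shows "transpose h ** (transpose g ** X ** g) ** h = X"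
proof -
  have "transpose h ** (transpose g ** X ** g) ** h = transpose (g ** h) ** X ** (g ** h)"
    by (simp add: matrix_transpose_mul matrix_mul_assoc)
  then show ?thesis
    using assms by simp
qed

lemma invertible_matrix_inv:
  assumes "invertible A"
  shows "A ** matrix_inv A = mat 1" "matrix_inv A ** A = mat 1"
proof -
  have "A ** matrix_inv A = mat 1 \<and> matrix_inv A ** A = mat 1"
    using assms unfolding invertible_def matrix_inv_def by (rule someI_ex)
  then show "A ** matrix_inv A = mat 1" "matrix_inv A ** A = mat 1"
    by simp_all
qed

lemma matrix_inv_eqI:
  fixes A :: "'a::semiring_1^'n^'m"
  assumes "A ** B = mat 1" "B ** A = mat 1"
  shows "matrix_inv A = B"
proof -
  have "invertible A"
    using assms unfolding invertible_def by blast
  then have "B ** (A ** matrix_inv A) = (B ** A) ** matrix_inv A"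
    by (simp add: matrix_mul_assoc)
  then show ?thesis
    using assms invertible_matrix_inv[OF \<open>invertible A\<close>] by simp
qed

lemma GL2Z_matrix_inv:
  assumes "g \<in> GL2Z"
  shows "matrix_inv g \<in> GL2Z" "g ** matrix_inv g = mat 1" "matrix_inv g ** g = mat 1"
proof -
  define e where "e = det g"
  have det_g: "g$1$1 * g$2$2 - g$1$2 * g$2$1 = e"
    by (simp add: e_def det_2)
  have e_sq: "e * e = 1"
    using assms by (simp add: GL2Z_def e_def abs_if split: if_splits)
  have g_int: "g$i$j \<in> \<int>" for i j
    using assms by (simp add: GL2Z_def int_mat_def)
  \<comment> \<open>the adjugate divided by the determinant \<open>e\<close>, using \<open>1 / e = e\<close>\<close>
  define H :: mat2 where "H = vector [vector [e * g$2$2, - e * g$1$2], vector [- e * g$2$1, e * g$1$1]]"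
  have H_nth: "H$1$1 = e * g$2$2" "H$1$2 = - e * g$1$2" "H$2$1 = - e * g$2$1" "H$2$2 = e * g$1$1"
    by (simp_all add: H_def)
  have "e * (g$1$1 * g$2$2 - g$1$2 * g$2$1) = 1"
    using det_g e_sq by simp
  then have gH: "g ** H = mat 1" and Hg: "H ** g = mat 1"
    by (auto simp: mat2_eq_iff matrix_matrix_mult_nth_2 H_nth algebra_simps)
  then have inv_g: "matrix_inv g = H"
    by (rule matrix_inv_eqI)
  have "det H = e * e * e"
    by (simp add: det_2 H_nth flip: det_g) (simp add: algebra_simps)
  then have "\<bar>det H\<bar> = 1"
    using e_sq assms by (simp add: GL2Z_def e_def)
  moreover have "H$i$j \<in> \<int>" for i j
    using g_int by (simp add: H_def forall_2 vector_def e_def det_2 exhaust_2[of i] exhaust_2[of j])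
  ultimately show "matrix_inv g \<in> GL2Z"
    by (simp add: inv_g GL2Z_def int_mat_def)
  show "g ** matrix_inv g = mat 1" "matrix_inv g ** g = mat 1"
    using gH Hg by (simp_all add: inv_g)
qed

lemma transpose_GL2Z: "g \<in> GL2Z \<Longrightarrow> transpose g \<in> GL2Z"
  by (simp add: GL2Z_def int_mat_def det_transpose)

lemma Ints_square_ge_1:
  fixes x :: "'a::linordered_idom"
  assumes "x \<in> \<int>" "x \<noteq> 0"
  shows "1 \<le> x\<^sup>2"
proof -
  have "1 \<le> \<bar>x\<bar>"
    using assms by (rule Ints_nonzero_abs_ge1)
  then have "1 * 1 \<le> \<bar>x\<bar> * \<bar>x\<bar>"
    by (intro mult_mono) auto
  then show ?thesis
    by (simp add: power2_eq_square)
qed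

lemma Ints_sum_squares_ge_1:
  fixes x y :: "'a::linordered_idom"
  assumes "x \<in> \<int>" "y \<in> \<int>" "x \<noteq> 0 \<or> y \<noteq> 0"
  shows "1 \<le> x\<^sup>2 + y\<^sup>2"
  using assms Ints_square_ge_1[of x] Ints_square_ge_1[of y]
  by (auto simp: add_increasing add_increasing2)

lemma Ints_sum_squares_ge_2:
  fixes x y :: "'a::linordered_idom"
  assumes "x \<in> \<int>" "y \<in> \<int>" "x * y \<noteq> 0"
  shows "2 \<le> x\<^sup>2 + y\<^sup>2"
  using assms Ints_square_ge_1[of x] Ints_square_ge_1[of y] by simp

lemma GL2Z_row_norm_ge_1:
  assumes "g \<in> GL2Z"
  shows "1 \<le> (g$i$1)\<^sup>2 + (g$i$2)\<^sup>2"
proof (rule Ints_sum_squares_ge_1)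
  show "g$i$1 \<in> \<int>" "g$i$2 \<in> \<int>"
    using assms by (simp_all add: GL2Z_def int_mat_def)
  have "det g \<noteq> 0"
    using assms by (auto simp: GL2Z_def)
  then show "g$i$1 \<noteq> 0 \<or> g$i$2 \<noteq> 0"
    using exhaust_2[of i] by (auto simp: det_2)
qed

lemma GL2Z_column_norm_ge_1:
  assumes "g \<in> GL2Z"
  shows "1 \<le> (g$1$j)\<^sup>2 + (g$2$j)\<^sup>2"
  using GL2Z_row_norm_ge_1[OF transpose_GL2Z[OF assms], of j] by simp

lemma mdiag_congruence_nth:
  "(transpose (g::mat2) ** mdiag p q ** g) $ i $ j = p * g$1$i * g$1$j + q * g$2$i * g$2$j"
  by (simp add: matrix_matrix_mult_nth_2)

lemma trace_mdiag_congruence: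
  "trace (transpose (g::mat2) ** mdiag p q ** g) = p * ((g$1$1)\<^sup>2 + (g$1$2)\<^sup>2) + q * ((g$2$1)\<^sup>2 + (g$2$2)\<^sup>2)"
  by (simp add: trace_2 mdiag_congruence_nth power2_eq_square algebra_simps)

lemma pos_def_diagonal_pos:
  assumes "pos_def S"
  shows "0 < S$i$i"
  using assms inner_axis_matrix_axis[of i S i] unfolding pos_def_def
  by (metis axis_eq_0_iff one_neq_zero)

lemma pos_def_mdiag:
  assumes "0 < a" "0 < b"
  shows "pos_def (mdiag a b)"
  unfolding pos_def_def
proof (intro conjI allI impI)
  show "sym_mat (mdiag a b)"
    by (simp add: sym_mat_def mat2_eq_iff)
  fix x :: "real^2"
  assume "x \<noteq> 0"
  then have "x$1 \<noteq> 0 \<or> x$2 \<noteq> 0"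
    by (auto simp: vec_eq_iff forall_2)
  moreover have "x \<bullet> (mdiag a b *v x) = a * (x$1)\<^sup>2 + b * (x$2)\<^sup>2"
    by (simp add: inner_vec_def matrix_vector_mult_def sum_2 power2_eq_square algebra_simps)
  ultimately show "0 < x \<bullet> (mdiag a b *v x)"
    using assms by (auto simp: add_pos_nonneg add_nonneg_pos)
qed

lemma minkowski_reduced_broad_mdiag:
  assumes "0 < a" "0 < b"
  shows "minkowski_reduced_broad (mdiag a b)"
  unfolding minkowski_reduced_broad_def
proof (intro conjI ballI)
  show "pos_def (mdiag a b)"
    using assms by (rule pos_def_mdiag)
  fix k
  assume k: "k \<in> GL2Z"
  have "mdot (mdiag a b) (mat 1) = a * 1 + b * 1"
    by (simp add: mdot_mat_1 trace_2)
  also have "\<dots> \<le> a * ((k$1$1)\<^sup>2 + (k$2$1)\<^sup>2) + b * ((k$1$2)\<^sup>2 + (k$2$2)\<^sup>2)"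
    using assms GL2Z_column_norm_ge_1[OF k] by (intro add_mono mult_left_mono) auto
  also have "\<dots> = mdot (k ** mdiag a b ** transpose k) (mat 1)"
    using trace_mdiag_congruence[of "transpose k" a b] by (simp add: mdot_mat_1)
  finally show "mdot (mdiag a b) (mat 1) \<le> mdot (k ** mdiag a b ** transpose k) (mat 1)" .
qed

lemma reflection_invariant_diagonal:
  assumes "transpose (mdiag 1 (-1)) ** D ** mdiag 1 (-1) = D"
  shows "D = mdiag (D$1$1) (D$2$2)"
  using assms by (simp add: mat2_eq_iff matrix_matrix_mult_nth_2)

lemma primitive_rectangular_diagonalizable:
  assumes "primitive_rectangular S"
  obtains g p q where "g \<in> GL2Z" "S = transpose g ** mdiag p q ** g"
proof -
  define J where "J = mdiag 1 (-1)"
  from assms obtain a b g where g: "g \<in> GL2Z"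
    and conj: "aut (mdiag a b) = (\<lambda>\<sigma>. g ** \<sigma> ** matrix_inv g) ` aut S"
    unfolding primitive_rectangular_def same_bravais_class_def conj_GL2Z_def by blast
  have "J \<in> aut (mdiag a b)"
    by (simp add: J_def aut_def GL2Z_def int_mat_def mat2_eq_iff matrix_matrix_mult_nth_2 det_2 forall_2)
  then obtain \<sigma> where \<sigma>: "\<sigma> \<in> aut S" and J_eq: "J = g ** \<sigma> ** matrix_inv g"
    using conj by auto
  define h where "h = matrix_inv g"
  have gh: "g ** h = mat 1" and hg: "h ** g = mat 1"
    using GL2Z_matrix_inv[OF g] by (simp_all add: h_def)
  have "h ** J ** g = (h ** g) ** \<sigma> ** (h ** g)"
    by (simp add: J_eq h_def matrix_mul_assoc)
  then have \<sigma>_eq: "\<sigma> = h ** J ** g"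
    using hg by simp
  define D where "D = transpose h ** S ** h"
  have S_eq: "S = transpose g ** D ** g"
    using congruence_inverse[OF hg] by (simp add: D_def)
  have "transpose g ** (transpose J ** D ** J) ** g = transpose \<sigma> ** S ** \<sigma>"
    by (simp add: \<sigma>_eq D_def matrix_transpose_mul matrix_mul_assoc)
  also have "\<dots> = transpose g ** D ** g"
    using \<sigma> S_eq by (simp add: aut_def)
  finally have "transpose J ** D ** J = D"
    by (metis congruence_inverse[OF gh])
  then have "S = transpose g ** mdiag (D$1$1) (D$2$2) ** g"
    using S_eq reflection_invariant_diagonal by (simp add: J_def)
  with g show ?thesis
    by (rule that)
qed

lemma mdot_mat_1_minus_congruence:
  "mdot X (mat 1 - transpose k ** k) = trace X - trace (k ** X ** transpose (k::mat2))"
  by (simp add: mdot_def trace_2 matrix_matrix_mult_nth_2 algebra_simps)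

lemma assumption_A21_trace_bound:
  assumes "assumption_A21 S Sobs" "minkowski_reduced_broad Sobs"
    and "k \<in> GL2Z" "int_vec v" "v \<noteq> 0"
  shows "trace S - trace (k ** S ** transpose k) < v \<bullet> (S *v v)"
proof (rule ccontr)
  \<comment> \<open>\<open>S \<bullet> T = tr S - tr (k S k\<^sup>T)\<close>, while \<open>S\<^sup>o\<^sup>b\<^sup>s \<bullet> T \<le> 0\<close> because \<open>S\<^sup>o\<^sup>b\<^sup>s\<close> is reduced\<close>
  define T where "T = mat 1 - transpose k ** k"
  assume "\<not> ?thesis"
  then have "v \<bullet> (S *v v) \<le> mdot S T"
    by (simp add: T_def mdot_mat_1_minus_congruence)
  moreover have "sym_mat T"
    by (simp add: T_def sym_mat_def mat2_eq_iff matrix_matrix_mult_nth_2)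
  ultimately have "0 < mdot Sobs T"
    using assms(1,4,5) unfolding assumption_A21_def by blast
  moreover have "mdot Sobs T \<le> 0"
    using assms(2,3) unfolding minkowski_reduced_broad_def
    by (simp add: T_def mdot_mat_1_minus_congruence mdot_mat_1)
  ultimately show False
    by simp
qed

lemma assumption_A21_diagonal_bound:
  assumes "assumption_A21 S Sobs" "minkowski_reduced_broad Sobs" "pos_def S"
    and g: "g \<in> GL2Z" and S_eq: "S = transpose g ** mdiag p q ** g"
  shows "0 < p" "0 < q" "trace S - (p + q) < min p q"
proof -
  define h where "h = matrix_inv g"
  have h: "h \<in> GL2Z" "g ** h = mat 1"
    using GL2Z_matrix_inv[OF g] by (simp_all add: h_def)
  have reduce: "transpose h ** S ** transpose (transpose h) = mdiag p q"
    using congruence_inverse[OF h(2)] by (simp add: S_eq)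
  have column: "int_vec (h *v axis i 1) \<and> h *v axis i 1 \<noteq> 0 \<and>
      (h *v axis i 1) \<bullet> (S *v (h *v axis i 1)) = mdiag p q $ i $ i" for i
  proof (intro conjI)
    have "h$i$j \<in> \<int>" for i j
      using h(1) by (simp add: GL2Z_def int_mat_def)
    then show "int_vec (h *v axis i 1)"
      by (simp add: int_vec_def matrix_vector_mult_basis column_def)
    have g_h_axis: "g *v (h *v axis i 1) = axis i 1"
      by (simp add: matrix_vector_mul_assoc h(2))
    then show "h *v axis i 1 \<noteq> 0"
      by auto
    show "(h *v axis i 1) \<bullet> (S *v (h *v axis i 1)) = mdiag p q $ i $ i"
      by (simp add: S_eq quadratic_form_congruence g_h_axis inner_axis_matrix_axis)
  qed
  show "0 < p" "0 < q"
    using column[of 1] column[of 2] \<open>pos_def S\<close> by (auto simp: pos_def_def)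
  have "trace (transpose h ** S ** transpose (transpose h)) = p + q"
    by (simp only: reduce trace_2 mdiag_nth)
  then have "trace S - (p + q) < mdiag p q $ i $ i" for i
    using assumption_A21_trace_bound[OF assms(1,2) transpose_GL2Z[OF h(1)]] column[of i]
    by metis
  from this[of 1] this[of 2] show "trace S - (p + q) < min p q"
    by simp
qed

lemma GL2Z_row_products_zero:
  assumes g: "g \<in> GL2Z" and "0 < p" "0 < q"
    and bound: "trace (transpose g ** mdiag p q ** g) - (p + q) < min p q"
  shows "g$1$1 * g$1$2 = 0" "g$2$1 * g$2$2 = 0"
proof -
  define A where "A = (g$1$1)\<^sup>2 + (g$1$2)\<^sup>2"
  define B where "B = (g$2$1)\<^sup>2 + (g$2$2)\<^sup>2"
  have "1 \<le> A" "1 \<le> B"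
    using GL2Z_row_norm_ge_1[OF g] by (simp_all add: A_def B_def)
  then have "0 \<le> p * (A - 1)" "0 \<le> q * (B - 1)"
    using assms by simp_all
  moreover have "p * (A - 1) + q * (B - 1) < p" "p * (A - 1) + q * (B - 1) < q"
    using bound by (simp_all add: trace_mdiag_congruence A_def B_def algebra_simps)
  ultimately have "p * (A - 1) < p * 1" "q * (B - 1) < q * 1"
    by linarith+
  then have "A < 2" "B < 2"
    using assms mult_less_cancel_left_pos by fastforce+
  moreover have "g$i$j \<in> \<int>" for i j
    using g by (simp add: GL2Z_def int_mat_def)
  ultimately show "g$1$1 * g$1$2 = 0" "g$2$1 * g$2$2 = 0"
    using Ints_sum_squares_ge_2 unfolding A_def B_def by (meson not_le)+
qed

theorem mainTheorem2:
  fixes S Sobs :: mat2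
  assumes "pos_def S"
    and "minkowski_reduced_broad Sobs"
    and "primitive_rectangular S"
    and "assumption_A21 S Sobs"
  shows "minkowski_reduced_broad S \<and> S \<in> V_rP"
proof -
  obtain g p q where g: "g \<in> GL2Z" and S_eq: "S = transpose g ** mdiag p q ** g"
    using assms(3) by (rule primitive_rectangular_diagonalizable)
  note bound = assumption_A21_diagonal_bound[OF assms(4,2,1) g S_eq]
  have "g$1$1 * g$1$2 = 0" "g$2$1 * g$2$2 = 0"
    using GL2Z_row_products_zero[OF g bound(1,2)] bound(3) S_eq by simp_all
  then have "S$1$2 = 0" "S$2$1 = 0"
    by (auto simp: S_eq mdiag_congruence_nth)
  then have S_diag: "S = mdiag (S$1$1) (S$2$2)"
    by (simp add: mat2_eq_iff)
  have "minkowski_reduced_broad (mdiag (S$1$1) (S$2$2))"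
    using pos_def_diagonal_pos[OF assms(1)] by (intro minkowski_reduced_broad_mdiag)
  then show ?thesis
    using S_diag unfolding V_rP_def by auto
qed

end
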